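(* Let $q>1$. The maximum success probability of any strategy for the New Hats-on-a-line Game with $q$ hat colours and two players is $1-\left(\frac{q-1}{q}\right)^{2}=\frac{2q-1}{q^2}$.
   Context: The New Hats-on-a-line Game with $q$ colours and $n$ players: players $P_1,\dots,P_n$ stand in a line, and each player $P_i$ receives a hat whose colour $c_i$ is chosen uniformly at random from a fixed set of $q$ colours, independently of the other hats. Player $P_i$ sees exactly the hat colours $c_{i+1},\dots,c_n$. The players respond sequentially in the order $P_1,\dots,P_n$; each response is either a colour (a guess of one's own hat colour) or "pass", and each player hears all previous responses. No other communication is allowed, apart from agreeing on a strategy beforehand. A strategy specifies, for each player $P_i$, his response as a function of the colours he sees and the responses he has heard. The players win if at least one player guesses correctly and no player guesses incorrectly; the success probability of a strategy is the probability that the players win. Here $n=2$. *)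

theory Defs
  imports Complex_Main "HOL-Library.Cardinality"
begin

text \<open>A response is 'c option: None = pass, Some c = guess colour c.
  Player 1 sees c2 only; player 2 sees nothing and hears player 1's response.\<close>

definition wins2 :: "('c \<Rightarrow> 'c option) \<Rightarrow> ('c option \<Rightarrow> 'c option) \<Rightarrow> 'c \<Rightarrow> 'c \<Rightarrow> bool" where
  "wins2 s1 s2 c1 c2 =
     (let r1 = s1 c2; r2 = s2 r1 in
        (r1 = Some c1 \<or> r2 = Some c2) \<and>
        (r1 = None \<or> r1 = Some c1) \<and> (r2 = None \<or> r2 = Some c2))"

definition success_prob2 :: "('c::finite \<Rightarrow> 'c option) \<Rightarrow> ('c option \<Rightarrow> 'c option) \<Rightarrow> real" where
  "success_prob2 s1 s2 =
     real (card {p :: 'c \<times> 'c. wins2 s1 s2 (fst p) (snd p)}) / real (card (UNIV :: ('c \<times> 'c) set))"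

end

theory Submission
  imports Defs
begin

text \<open>Player 1 wins by guessing only when his guess is right, which for each colour \<open>c\<^sub>2\<close>
  he sees happens for one colour \<open>c\<^sub>1\<close> only. Player 2, having heard a pass, can only
  guess a fixed colour \<open>k\<close>; this wins for the \<open>q\<close> pairs with \<open>c\<^sub>2 = k\<close>, but only if
  player 1 passes on seeing \<open>k\<close>, which costs him the \<open>c\<^sub>2 = k\<close> column. Hence at most
  \<open>2q - 1\<close> of the \<open>q\<^sup>2\<close> colourings are won, and "guess \<open>a\<close> unless you see \<open>b\<close>;
  say \<open>b\<close> after a pass" attains this.\<close>

definition winning_pairs :: "('c \<Rightarrow> 'c option) \<Rightarrow> ('c option \<Rightarrow> 'c option) \<Rightarrow> ('c \<times> 'c) set" where
  "winning_pairs s1 s2 = {p. wins2 s1 s2 (fst p) (snd p)}"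

lemma success_prob2_eq_card_winning_pairs:
  fixes s1 :: "'c::finite \<Rightarrow> 'c option"
  shows "success_prob2 s1 s2 = real (card (winning_pairs s1 s2)) / real CARD('c) ^ 2"
  by (simp add: success_prob2_def winning_pairs_def card_cartesian_product power2_eq_square
      flip: UNIV_Times_UNIV)

lemma card_winning_pairs_le:
  fixes s1 :: "'c::finite \<Rightarrow> 'c option" and s2 :: "'c option \<Rightarrow> 'c option"
  shows "card (winning_pairs s1 s2) \<le> 2 * CARD('c) - 1"
proof -
  define K where "K = {c2. s2 None = Some c2 \<and> s1 c2 = None}"
  define first_guess_right where "first_guess_right = {p :: 'c \<times> 'c. s1 (snd p) = Some (fst p)}"
  have winning_subset: "winning_pairs s1 s2 \<subseteq> UNIV \<times> K \<union> first_guess_right"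
    by (auto simp: winning_pairs_def wins2_def K_def first_guess_right_def Let_def
        split: option.splits)
  have "K \<subseteq> {the (s2 None)}"
    by (auto simp: K_def)
  then have card_K: "card K \<le> 1"
    using card_mono[of "{the (s2 None)}" K] by simp
  have "card first_guess_right = card (snd ` first_guess_right)"
    by (rule card_image[symmetric]) (auto simp: first_guess_right_def inj_on_def prod_eq_iff)
  also have "\<dots> \<le> card (UNIV - K)"
    by (rule card_mono) (auto simp: first_guess_right_def K_def)
  also have "\<dots> = CARD('c) - card K"
    by (simp add: card_Diff_subset)
  finally have card_first_guess_right: "card first_guess_right \<le> CARD('c) - card K" .
  have "card (winning_pairs s1 s2) \<le> card ((UNIV :: 'c set) \<times> K) + card first_guess_right"
    using card_mono[OF finite winning_subset] card_Un_le[of "UNIV \<times> K" first_guess_right]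
    by linarith
  also have "\<dots> \<le> 2 * CARD('c) - 1"
    using card_K card_first_guess_right
    by (cases "card K") (auto simp: card_cartesian_product)
  finally show ?thesis .
qed

lemma card_winning_pairs_optimal:
  assumes "CARD('c::finite) > 1"
  obtains s1 :: "'c::finite \<Rightarrow> 'c option" and s2 :: "'c option \<Rightarrow> 'c option"
    where "card (winning_pairs s1 s2) = 2 * CARD('c) - 1"
proof -
  obtain a b :: 'c where "a \<noteq> b"
    using assms card_le_Suc0_iff_eq[of "UNIV :: 'c set"] by auto
  define s1 where "s1 = (\<lambda>c2 :: 'c. if c2 = b then None else Some a)"
  define s2 where "s2 = (\<lambda>r :: 'c option. if r = None then Some b else None)"
  have "winning_pairs s1 s2 = UNIV \<times> {b} \<union> {a} \<times> (UNIV - {b})"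
    using \<open>a \<noteq> b\<close> by (auto simp: winning_pairs_def wins2_def s1_def s2_def Let_def)
  moreover have "card (UNIV \<times> {b} \<union> {a} \<times> (UNIV - {b})) = CARD('c) + (CARD('c) - 1)"
    by (subst card_Un_disjoint) (auto simp: card_cartesian_product card_Diff_subset)
  ultimately show ?thesis
    using assms that[of s1 s2] by simp
qed

lemma success_prob2_le:
  fixes s1 :: "'c::finite \<Rightarrow> 'c option"
  shows "success_prob2 s1 s2 \<le> (2 * real CARD('c) - 1) / real CARD('c) ^ 2"
proof -
  have "real (card (winning_pairs s1 s2)) \<le> real (2 * CARD('c) - 1)"
    using card_winning_pairs_le[of s1 s2] by (rule of_nat_mono)
  also have "\<dots> = 2 * real CARD('c) - 1"
    using finite_UNIV_card_ge_0[where 'a='c] by (simp add: of_nat_diff)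
  finally have "real (card (winning_pairs s1 s2)) \<le> 2 * real CARD('c) - 1" .
  then show ?thesis
    by (simp add: success_prob2_eq_card_winning_pairs divide_right_mono)
qed

lemma success_prob2_optimal:
  assumes "CARD('c::finite) > 1"
  obtains s1 :: "'c::finite \<Rightarrow> 'c option" and s2 :: "'c option \<Rightarrow> 'c option"
    where "success_prob2 s1 s2 = (2 * real CARD('c) - 1) / real CARD('c) ^ 2"
proof -
  obtain s1 :: "'c \<Rightarrow> 'c option" and s2
    where "card (winning_pairs s1 s2) = 2 * CARD('c) - 1"
    using card_winning_pairs_optimal assms by metis
  then have "success_prob2 s1 s2 = (2 * real CARD('c) - 1) / real CARD('c) ^ 2"
    using assms by (simp add: success_prob2_eq_card_winning_pairs of_nat_diff)
  then show ?thesis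
    using that by blast
qed

theorem theorem3:
  fixes q :: nat
  assumes "CARD('c::finite) = q" and "q > 1"
  shows "Max {success_prob2 s1 s2 | (s1 :: 'c \<Rightarrow> 'c option) s2. True}
           = 1 - ((real q - 1) / real q) ^ 2
       \<and> 1 - ((real q - 1) / real q) ^ 2 = (2 * real q - 1) / (real q) ^ 2"
proof -
  let ?S = "{success_prob2 s1 s2 | (s1 :: 'c \<Rightarrow> 'c option) s2. True}"
  let ?p = "(2 * real q - 1) / (real q) ^ 2"
  have "?S = (\<lambda>(s1, s2). success_prob2 s1 s2) `
      (UNIV :: (('c \<Rightarrow> 'c option) \<times> ('c option \<Rightarrow> 'c option)) set)"
    by auto
  then have "finite ?S"
    by simp
  moreover have "x \<le> ?p" if "x \<in> ?S" for x
    using that success_prob2_le assms(1) by auto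
  moreover have "?p \<in> ?S"
    using success_prob2_optimal[where 'c='c] assms by (metis (mono_tags, lifting) mem_Collect_eq)
  ultimately have "Max ?S = ?p"
    by (rule Max_eqI)
  moreover have "1 - ((real q - 1) / real q) ^ 2 = ?p"
    using assms(2) by (simp add: field_simps power2_eq_square)
  ultimately show ?thesis
    by simp
qed

end
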